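(* Let $(a_i)_{i=1}^n$, $a_i=(m_i,x_i,v_i)$, be a system of $n$ particles (as defined in the context) with sticky trajectories $\gamma_1,\dots,\gamma_n$. Let $P_0=(0,0)$ and $P_k=\left(\sum_{i=1}^k m_i,\ \sum_{i=1}^k m_i v_i\right)$ for $1\le k\le n$, let $f:[0,\sum_{i=1}^n m_i]\to\mathbb{R}$ be the continuous piecewise linear function whose graph is the union of the segments $[P_{k-1},P_k]$, and let $r$ be the convex envelope of $f$. Let $0=k_0<k_1<\cdots<k_\ell=n$ be all indices $k$ for which $P_k$ lies on the graph of $r$, and for $1\le j\le\ell$ let $T_j=\{a_i: k_{j-1}<i\le k_j\}$. Then for $i\neq j$, no particle of $T_i$ ever collides with a particle of $T_j$, i.e. $\gamma_p(t)\neq\gamma_q(t)$ for all $t\ge 0$ whenever $a_p\in T_i$, $a_q\in T_j$.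
   Context: A particle is a triple $a=(m,x,v)\in\mathbb{R}_{>0}\times\mathbb{R}\times\mathbb{R}$ (mass, initial position, initial velocity). A system of $n$ particles is an $n$-tuple $(a_i)_{i=1}^n$ with $x_i<x_j$ iff $i<j$. To each particle is associated a unique continuous piecewise linear trajectory $\gamma_i:[0,\infty)\to\mathbb{R}$ such that: (1) $\gamma_i(0)=x_i$ and $\dot\gamma_i(0+)=v_i$; (2) (stickiness) if $\gamma_i(s)=\gamma_j(s)$ then $\gamma_i(t)=\gamma_j(t)$ for all $t\ge s$; (3) (conservation of momentum) if $\gamma_{i_1}(t)=\cdots=\gamma_{i_p}(t)\neq\gamma_i(t)$ for all other $i$, at some $t>0$, then $\dot\gamma_{i_q}(t+)=\frac{\sum_{k=1}^p m_{i_k}\dot\gamma_{i_k}(t-)}{\sum_{k=1}^p m_{i_k}}$ for each $q$. Here $\dot\gamma(t\pm)$ denotes one-sided derivatives. The convex envelope of $f$ is $\sup\{g\le f: g \text{ convex}\}$. *)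

theory Defs
  imports "HOL-Analysis.Analysis"
begin

text \<open>Particles are indexed by 1..n; masses m, initial positions x, initial velocities v.\<close>

definition particle_system :: "nat \<Rightarrow> (nat \<Rightarrow> real) \<Rightarrow> (nat \<Rightarrow> real) \<Rightarrow> bool" where
  "particle_system n m x \<longleftrightarrow>
     (\<forall>i\<in>{1..n}. m i > 0) \<and> (\<forall>i\<in>{1..n}. \<forall>j\<in>{1..n}. x i < x j \<longleftrightarrow> i < j)"

definition piecewise_linear_halfline :: "(real \<Rightarrow> real) \<Rightarrow> bool" where
  "piecewise_linear_halfline g \<longleftrightarrow> continuous_on {0..} g \<and>
     (\<exists>S. finite S \<and> (\<forall>a b. 0 \<le> a \<and> a < b \<and> {a<..<b} \<inter> S = {} \<longrightarrow>
        (\<exists>c d. \<forall>t\<in>{a..b}. g t = c + d * t)))"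

text \<open>Sticky trajectories: conditions (1)-(3) of the context, plus continuity and piecewise
  linearity. Right/left one-sided derivatives are derivatives within {t..} / {..t}.\<close>
definition sticky_trajectories ::
  "nat \<Rightarrow> (nat \<Rightarrow> real) \<Rightarrow> (nat \<Rightarrow> real) \<Rightarrow> (nat \<Rightarrow> real) \<Rightarrow> (nat \<Rightarrow> real \<Rightarrow> real) \<Rightarrow> bool" where
  "sticky_trajectories n m x v \<gamma> \<longleftrightarrow>
     (\<forall>i\<in>{1..n}. piecewise_linear_halfline (\<gamma> i)) \<and>
     (\<forall>i\<in>{1..n}. \<gamma> i 0 = x i \<and> (\<gamma> i has_real_derivative v i) (at 0 within {0..})) \<and>
     (\<forall>i\<in>{1..n}. \<forall>j\<in>{1..n}. \<forall>s\<ge>0. \<gamma> i s = \<gamma> j s \<longrightarrow> (\<forall>t\<ge>s. \<gamma> i t = \<gamma> j t)) \<and>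
     (\<forall>t>0. \<forall>q\<in>{1..n}.
        let C = {k\<in>{1..n}. \<gamma> k t = \<gamma> q t} in
        \<exists>w. (\<forall>k\<in>C. (\<gamma> k has_real_derivative w k) (at t within {..t})) \<and>
            (\<gamma> q has_real_derivative ((\<Sum>k\<in>C. m k * w k) / (\<Sum>k\<in>C. m k))) (at t within {t..}))"

text \<open>Cumulative mass and momentum: P_k = (cmass k, cmom k).\<close>
definition cmass :: "(nat \<Rightarrow> real) \<Rightarrow> nat \<Rightarrow> real" where
  "cmass m k = (\<Sum>i=1..k. m i)"

definition cmom :: "(nat \<Rightarrow> real) \<Rightarrow> (nat \<Rightarrow> real) \<Rightarrow> nat \<Rightarrow> real" where
  "cmom m v k = (\<Sum>i=1..k. m i * v i)"

text \<open>The continuous piecewise linear function whose graph is the union of the segments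
  [P_(k-1), P_k]: on [cmass (k-1), cmass k] it has slope v k. Written in closed form:
  each segment i contributes v i times the portion of [cmass (i-1), cmass i] lying left of s.\<close>
definition polygon_fn :: "nat \<Rightarrow> (nat \<Rightarrow> real) \<Rightarrow> (nat \<Rightarrow> real) \<Rightarrow> real \<Rightarrow> real" where
  "polygon_fn n m v s = (\<Sum>i=1..n. v i * max 0 (min (m i) (s - cmass m (i - 1))))"

definition convex_envelope :: "real set \<Rightarrow> (real \<Rightarrow> real) \<Rightarrow> real \<Rightarrow> real" where
  "convex_envelope D f s = Sup {g s |g. convex_on D g \<and> (\<forall>u\<in>D. g u \<le> f u)}"

definition contact_indices :: "nat \<Rightarrow> (nat \<Rightarrow> real) \<Rightarrow> (nat \<Rightarrow> real) \<Rightarrow> nat set" where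
  "contact_indices n m v =
     {k\<in>{0..n}. convex_envelope {0..cmass m n} (polygon_fn n m v) (cmass m k) = cmom m v k}"

definition kseq :: "nat \<Rightarrow> (nat \<Rightarrow> real) \<Rightarrow> (nat \<Rightarrow> real) \<Rightarrow> nat list" where
  "kseq n m v = sorted_list_of_set (contact_indices n m v)"

definition nblocks :: "nat \<Rightarrow> (nat \<Rightarrow> real) \<Rightarrow> (nat \<Rightarrow> real) \<Rightarrow> nat" where
  "nblocks n m v = length (kseq n m v) - 1"

definition block :: "nat \<Rightarrow> (nat \<Rightarrow> real) \<Rightarrow> (nat \<Rightarrow> real) \<Rightarrow> nat \<Rightarrow> nat set" where
  "block n m v j = {i. kseq n m v ! (j - 1) < i \<and> i \<le> kseq n m v ! j}"

end

theory Submission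
  imports Defs
begin

text \<open>Let \<open>k\<close> be a contact index and suppose that particles \<open>p \<le> k < q\<close> meet. Trajectories
  never cross, so particles \<open>k\<close> and \<open>k + 1\<close> meet too; let \<open>\<tau>\<close> be their first meeting time
  and let \<open>{j+1..k}\<close> and \<open>{k+1..l}\<close> be the maximal runs of particles sitting at their
  common position \<open>y\<close> at time \<open>\<tau>\<close>. Before \<open>\<tau>\<close> neither run touches a particle outside
  it, and a collision only redistributes momentum inside a cluster, so the momentum of each
  run moves freely and \<open>y\<close> is the free centre of mass of either run at time \<open>\<tau>\<close>. The left
  run starts at or left of \<open>x k\<close> with velocity the slope of the chord \<open>P\<^sub>j P\<^sub>k\<close>, the right
  run starts at or right of \<open>x (k+1) > x k\<close> with velocity the slope of \<open>P\<^sub>k P\<^sub>l\<close>; since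
  \<open>P\<^sub>k\<close> lies on the convex envelope the first slope is at most the second, so the two
  centres of mass can never coincide.\<close>

section \<open>Sums, chords and fibre averages\<close>

lemma sum_Suc_atLeastAtMost_eq_diff:
  fixes f :: "nat \<Rightarrow> 'a::ab_group_add"
  assumes "j \<le> l"
  shows "(\<Sum>i=Suc j..l. f i) = (\<Sum>i=1..l. f i) - (\<Sum>i=1..j. f i)"
  using sum.ub_add_nat[of 1 j f "l - j"] assms by simp

lemma slope_le_of_le_chord:
  fixes a b c fa fb fc :: real
  assumes "a < b" "b < c" and t: "t = (b - a) / (c - a)"
    and chord: "fb \<le> (1 - t) * fa + t * fc"
  shows "(fb - fa) / (b - a) \<le> (fc - fb) / (c - b)"
proof -
  have "(c - a) * fb \<le> (c - a) * ((1 - t) * fa + t * fc)"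
    using chord assms(1,2) by (intro mult_left_mono) auto
  also have "\<dots> = (c - a) * fa + ((c - a) * t) * (fc - fa)"
    by (simp add: algebra_simps)
  also have "(c - a) * t = b - a"
    using assms(1,2) t by simp
  finally have "(fb - fa) * (c - b) \<le> (fc - fb) * (b - a)"
    by (simp add: algebra_simps)
  then show ?thesis
    using assms(1,2) by (simp add: frac_le_eq divide_nonpos_pos)
qed

lemma convex_envelope_le_chord:
  fixes f :: "real \<Rightarrow> real"
  assumes "convex D" "\<And>u. u \<in> D \<Longrightarrow> B \<le> f u" "x \<in> D" "y \<in> D" "0 \<le> t" "t \<le> 1"
  shows "convex_envelope D f ((1 - t) * x + t * y) \<le> (1 - t) * f x + t * f y"
  unfolding convex_envelope_def
proof (rule cSup_least)
  show "{g ((1 - t) * x + t * y) |g. convex_on D g \<and> (\<forall>u\<in>D. g u \<le> f u)} \<noteq> {}"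
    using assms(1,2) by (auto intro!: exI[of _ "\<lambda>_. B"] simp: convex_on_const)
next
  fix z assume "z \<in> {g ((1 - t) * x + t * y) |g. convex_on D g \<and> (\<forall>u\<in>D. g u \<le> f u)}"
  then obtain g where z: "z = g ((1 - t) * x + t * y)" and g: "convex_on D g" "\<forall>u\<in>D. g u \<le> f u"
    by blast
  have "g ((1 - t) * x + t * y) \<le> (1 - t) * g x + t * g y"
    using convex_onD[OF g(1) assms(5,6,3,4)] by simp
  also have "\<dots> \<le> (1 - t) * f x + t * f y"
    using g(2) assms(3-6) by (intro add_mono mult_left_mono) auto
  finally show "z \<le> (1 - t) * f x + t * f y"
    using z by simp
qed

lemma sum_weighted_fibre_averages:
  fixes w L :: "'a \<Rightarrow> real" and h :: "'a \<Rightarrow> 'b"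
  assumes "finite G" "\<forall>k\<in>G. 0 < w k"
  shows "(\<Sum>q\<in>G. w q * ((\<Sum>k\<in>{k\<in>G. h k = h q}. w k * L k) / (\<Sum>k\<in>{k\<in>G. h k = h q}. w k)))
           = (\<Sum>k\<in>G. w k * L k)"
proof -
  define F where "F y = (\<Sum>k\<in>{k\<in>G. h k = y}. w k * L k) / (\<Sum>k\<in>{k\<in>G. h k = y}. w k)" for y
  have "(\<Sum>q\<in>G. w q * F (h q)) = (\<Sum>y\<in>h ` G. \<Sum>q\<in>{q\<in>G. h q = y}. w q * F (h q))"
    by (rule sum.image_gen[OF assms(1)])
  also have "\<dots> = (\<Sum>y\<in>h ` G. (\<Sum>q\<in>{q\<in>G. h q = y}. w q) * F y)"
    by (auto simp: sum_distrib_right intro!: sum.cong)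
  also have "\<dots> = (\<Sum>y\<in>h ` G. \<Sum>k\<in>{k\<in>G. h k = y}. w k * L k)"
  proof (rule sum.cong[OF refl])
    fix y assume "y \<in> h ` G"
    then obtain q where "q \<in> G" "h q = y"
      by blast
    then have "0 < (\<Sum>q\<in>{q\<in>G. h q = y}. w q)"
      using assms by (intro sum_pos2[of _ q]) auto
    then show "(\<Sum>q\<in>{q\<in>G. h q = y}. w q) * F y = (\<Sum>k\<in>{k\<in>G. h k = y}. w k * L k)"
      by (simp add: F_def)
  qed
  also have "\<dots> = (\<Sum>k\<in>G. w k * L k)"
    by (rule sum.image_gen[OF assms(1), symmetric])
  finally show ?thesis
    by (simp add: F_def)
qed

lemma centre_of_mass_stays_left:
  fixes M X P M' X' P' a b \<tau> :: real
  assumes "0 < M" "0 < M'" "0 \<le> \<tau>" "X \<le> M * a" "M' * b \<le> X'" "a < b" "P / M \<le> P' / M'"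
  shows "(X + \<tau> * P) / M < (X' + \<tau> * P') / M'"
proof -
  have "(X + \<tau> * P) / M = X / M + \<tau> * (P / M)"
    by (simp add: add_divide_distrib)
  also have "\<dots> \<le> a + \<tau> * (P' / M')"
    using assms(1,3,4,7) by (intro add_mono mult_left_mono) (simp_all add: pos_divide_le_eq mult.commute)
  also have "\<dots> < b + \<tau> * (P' / M')"
    using assms(6) by simp
  also have "\<dots> \<le> X' / M' + \<tau> * (P' / M')"
    using assms(2,5) by (simp add: pos_le_divide_eq mult.commute)
  also have "\<dots> = (X' + \<tau> * P') / M'"
    by (simp add: add_divide_distrib)
  finally show ?thesis .
qed

lemma maximal_run_around:
  fixes P :: "nat \<Rightarrow> bool"
  assumes "P k" "P (Suc k)" "1 \<le> k" "Suc k \<le> n"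
  obtains j l where "j < k" "k < l" "l \<le> n" "P (Suc j)" "P l"
    "0 < j \<Longrightarrow> \<not> P j" "l < n \<Longrightarrow> \<not> P (Suc l)"
proof -
  define A where "A = {i \<in> {1..k}. P i}"
  define B where "B = {i \<in> {Suc k..n}. P i}"
  have "finite A" "finite B" "k \<in> A" "Suc k \<in> B"
    using assms by (auto simp: A_def B_def)
  then have "Min A \<in> A" "Max B \<in> B"
    using Min_in Max_in by blast+
  show ?thesis
  proof (rule that[of "Min A - 1" "Max B"])
    show "\<not> P (Min A - 1)" if "0 < Min A - 1"
    proof
      assume "P (Min A - 1)"
      then have "Min A - 1 \<in> A"
        using \<open>Min A \<in> A\<close> that by (auto simp: A_def)
      then show False
        using Min_le[OF \<open>finite A\<close>] that by fastforce
    qed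
    show "\<not> P (Suc (Max B))" if "Max B < n"
    proof
      assume "P (Suc (Max B))"
      then have "Suc (Max B) \<in> B"
        using \<open>Max B \<in> B\<close> that by (auto simp: B_def)
      then show False
        using Max_ge[OF \<open>finite B\<close>] by fastforce
    qed
  qed (use \<open>Min A \<in> A\<close> \<open>Max B \<in> B\<close> in \<open>auto simp: A_def B_def\<close>)
qed

section \<open>Real functions on the half-line\<close>

lemma piecewise_linear_halflineE:
  assumes "piecewise_linear_halfline f"
  obtains S where "finite S"
    "\<And>a b. 0 \<le> a \<Longrightarrow> a < b \<Longrightarrow> {a<..<b} \<inter> S = {} \<Longrightarrow> \<exists>c d. \<forall>t\<in>{a..b}. f t = c + d * t"
  using assms unfolding piecewise_linear_halfline_def by blast

lemma piecewise_linear_halflineI: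
  assumes "continuous_on {0..} f" "finite S"
    and "\<And>a b. 0 \<le> a \<Longrightarrow> a < b \<Longrightarrow> {a<..<b} \<inter> S = {} \<Longrightarrow> \<exists>c d. \<forall>t\<in>{a..b}. f t = c + d * t"
  shows "piecewise_linear_halfline f"
  using assms unfolding piecewise_linear_halfline_def by blast

lemma piecewise_linear_halfline_continuous:
  "piecewise_linear_halfline f \<Longrightarrow> continuous_on {0..} f"
  by (simp add: piecewise_linear_halfline_def)

lemma piecewise_linear_halfline_affine: "piecewise_linear_halfline (\<lambda>t. c + d * t)"
  by (rule piecewise_linear_halflineI[of _ "{}"]) (auto intro!: continuous_intros)

lemma piecewise_linear_halfline_add:
  assumes "piecewise_linear_halfline f" "piecewise_linear_halfline g"
  shows "piecewise_linear_halfline (\<lambda>t. f t + g t)"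
proof -
  obtain S where S: "finite S" "\<And>a b. 0 \<le> a \<Longrightarrow> a < b \<Longrightarrow> {a<..<b} \<inter> S = {} \<Longrightarrow>
      \<exists>c d. \<forall>t\<in>{a..b}. f t = c + d * t"
    by (rule piecewise_linear_halflineE[OF assms(1)]) blast
  obtain T where T: "finite T" "\<And>a b. 0 \<le> a \<Longrightarrow> a < b \<Longrightarrow> {a<..<b} \<inter> T = {} \<Longrightarrow>
      \<exists>c d. \<forall>t\<in>{a..b}. g t = c + d * t"
    by (rule piecewise_linear_halflineE[OF assms(2)]) blast
  show ?thesis
  proof (rule piecewise_linear_halflineI[of _ "S \<union> T"])
    show "continuous_on {0..} (\<lambda>t. f t + g t)"
      using assms by (intro continuous_intros piecewise_linear_halfline_continuous)
    show "finite (S \<union> T)"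
      using S(1) T(1) by simp
    fix a b assume "0 \<le> a" "a < b" "{a<..<b} \<inter> (S \<union> T) = {}"
    then obtain c d c' d' where "\<forall>t\<in>{a..b}. f t = c + d * t" "\<forall>t\<in>{a..b}. g t = c' + d' * t"
      using S(2)[of a b] T(2)[of a b] by blast
    then show "\<exists>c d. \<forall>t\<in>{a..b}. f t + g t = c + d * t"
      by (intro exI[of _ "c + c'"] exI[of _ "d + d'"]) (simp add: algebra_simps)
  qed
qed

lemma piecewise_linear_halfline_cmult:
  assumes "piecewise_linear_halfline f"
  shows "piecewise_linear_halfline (\<lambda>t. k * f t)"
proof -
  obtain S where S: "finite S" "\<And>a b. 0 \<le> a \<Longrightarrow> a < b \<Longrightarrow> {a<..<b} \<inter> S = {} \<Longrightarrow>
      \<exists>c d. \<forall>t\<in>{a..b}. f t = c + d * t"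
    by (rule piecewise_linear_halflineE[OF assms]) blast
  show ?thesis
  proof (rule piecewise_linear_halflineI[OF _ S(1)])
    show "continuous_on {0..} (\<lambda>t. k * f t)"
      using assms by (intro continuous_intros piecewise_linear_halfline_continuous)
    fix a b assume "0 \<le> a" "a < b" "{a<..<b} \<inter> S = {}"
    then obtain c d where "\<forall>t\<in>{a..b}. f t = c + d * t"
      using S(2) by blast
    then show "\<exists>c d. \<forall>t\<in>{a..b}. k * f t = c + d * t"
      by (intro exI[of _ "k * c"] exI[of _ "k * d"]) (simp add: algebra_simps)
  qed
qed

lemma piecewise_linear_halfline_sum:
  assumes "finite G" "\<And>i. i \<in> G \<Longrightarrow> piecewise_linear_halfline (f i)"
  shows "piecewise_linear_halfline (\<lambda>t. \<Sum>i\<in>G. f i t)"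
  using assms
proof (induction G rule: finite_induct)
  case empty
  then show ?case
    using piecewise_linear_halfline_affine[of 0 0] by simp
next
  case (insert i G)
  then show ?case
    by (simp add: piecewise_linear_halfline_add)
qed

lemma piecewise_linear_halfline_right_piece:
  fixes a :: real
  assumes "piecewise_linear_halfline \<psi>" "0 \<le> a"
  obtains b c d where "a < b" "\<forall>u\<in>{a..b}. \<psi> u = c + d * u"
proof -
  obtain S where S: "finite S" "\<And>a b. 0 \<le> a \<Longrightarrow> a < b \<Longrightarrow> {a<..<b} \<inter> S = {} \<Longrightarrow>
      \<exists>c d. \<forall>t\<in>{a..b}. \<psi> t = c + d * t"
    by (rule piecewise_linear_halflineE[OF assms(1)]) blast
  obtain \<delta> where "\<delta> > 0" and \<delta>: "\<forall>x\<in>S. x \<noteq> a \<longrightarrow> \<delta> \<le> dist a x"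
    using finite_set_avoid[OF S(1)] by blast
  have "{a<..<a + \<delta>} \<inter> S = {}"
    using \<delta> by (force simp: dist_real_def)
  then obtain c d where "\<forall>u\<in>{a..a + \<delta>}. \<psi> u = c + d * u"
    using S(2)[of a "a + \<delta>"] \<open>\<delta> > 0\<close> assms(2) by auto
  then show ?thesis
    using that[of "a + \<delta>"] \<open>\<delta> > 0\<close> by auto
qed

lemma right_derivative_eq_slope:
  assumes "(\<psi> has_real_derivative D) (at a within {a..})" "a < b"
    and "\<forall>u\<in>{a..b}. \<psi> u = c + d * u"
  shows "D = d"
proof -
  have "((\<lambda>u. c + d * u) has_real_derivative d) (at a within {a..})"
    by (auto intro!: derivative_eq_intros)
  then have "(\<psi> has_real_derivative d) (at a within {a..})"
    by (rule has_field_derivative_transform_within[where d = "b - a"])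
      (use assms(2,3) in \<open>auto simp: dist_real_def\<close>)
  then show ?thesis
    using assms(1) has_field_derivative_unique trivial_limit_at_right_real
    by (metis at_within_Ici_at_right)
qed

lemma left_derivative_eq_0_of_vanishing:
  assumes "(\<psi> has_real_derivative D) (at s within {..s})" "0 < s"
    and "\<And>u. 0 \<le> u \<Longrightarrow> u \<le> s \<Longrightarrow> \<psi> u = 0"
  shows "D = 0"
proof -
  have "((\<lambda>_. 0) has_real_derivative 0) (at s within {..s})"
    by simp
  then have "(\<psi> has_real_derivative 0) (at s within {..s})"
    by (rule has_field_derivative_transform_within[where d = s])
      (use assms(2,3) in \<open>auto simp: dist_real_def\<close>)
  then show ?thesis
    using assms(1) has_field_derivative_unique trivial_limit_at_left_real
    by (metis at_within_Iic_at_left)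
qed

lemma continuous_vanishes_at_right_end:
  fixes \<psi> :: "real \<Rightarrow> real"
  assumes "continuous_on {0..} \<psi>" "0 < s" "\<And>u. 0 \<le> u \<Longrightarrow> u < s \<Longrightarrow> \<psi> u = 0"
  shows "\<psi> s = 0"
proof -
  have "closed {u \<in> {0..s}. \<psi> u = 0}"
    by (rule continuous_closed_preimage_constant) (auto intro: continuous_on_subset[OF assms(1)])
  moreover have "{0..<s} \<subseteq> {u \<in> {0..s}. \<psi> u = 0}"
    using assms(3) by auto
  ultimately have "closure {0..<s} \<subseteq> {u \<in> {0..s}. \<psi> u = 0}"
    by (rule closure_minimal[rotated])
  then have sub: "{0..s} \<subseteq> {u \<in> {0..s}. \<psi> u = 0}"
    using assms(2) by (simp add: closure_atLeastLessThan)
  show ?thesis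
    using subsetD[OF sub, of s] assms(2) by simp
qed

lemma piecewise_linear_halfline_zero_extends:
  fixes \<psi> :: "real \<Rightarrow> real"
  assumes pl: "piecewise_linear_halfline \<psi>"
    and d0: "(\<psi> has_real_derivative 0) (at 0 within {0..})"
    and no_kink: "\<And>s. 0 < s \<Longrightarrow> s < \<tau> \<Longrightarrow> \<exists>D. (\<psi> has_real_derivative D) (at s within {..s})
                                          \<and> (\<psi> has_real_derivative D) (at s within {s..})"
    and "0 \<le> \<sigma>" "\<sigma> < \<tau>" and zero: "\<And>u. 0 \<le> u \<Longrightarrow> u \<le> \<sigma> \<Longrightarrow> \<psi> u = 0"
  obtains b where "\<sigma> < b" "\<forall>u\<in>{\<sigma>..b}. \<psi> u = 0"
proof -
  have right_0: "(\<psi> has_real_derivative 0) (at \<sigma> within {\<sigma>..})"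
  proof (cases "\<sigma> = 0")
    case False
    then obtain D where left: "(\<psi> has_real_derivative D) (at \<sigma> within {..\<sigma>})"
      and "(\<psi> has_real_derivative D) (at \<sigma> within {\<sigma>..})"
      using no_kink[of \<sigma>] \<open>0 \<le> \<sigma>\<close> \<open>\<sigma> < \<tau>\<close> by auto
    moreover have "D = 0"
      using left_derivative_eq_0_of_vanishing[OF left] False \<open>0 \<le> \<sigma>\<close> zero by auto
    ultimately show ?thesis
      by simp
  qed (use d0 in simp)
  obtain b c d where "\<sigma> < b" and piece: "\<forall>u\<in>{\<sigma>..b}. \<psi> u = c + d * u"
    using piecewise_linear_halfline_right_piece[OF pl \<open>0 \<le> \<sigma>\<close>] by blast
  then have "d = 0"
    using right_derivative_eq_slope[OF right_0] by blast
  then have "\<forall>u\<in>{\<sigma>..b}. \<psi> u = 0"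
    using piece zero[of \<sigma>] \<open>0 \<le> \<sigma>\<close> \<open>\<sigma> < b\<close> by auto
  with \<open>\<sigma> < b\<close> show ?thesis
    by (rule that)
qed

text \<open>Applied below to the momentum of an isolated group of particles minus its free motion;
  the collision rule is what excludes kinks.\<close>

lemma piecewise_linear_halfline_eq_0:
  fixes \<psi> :: "real \<Rightarrow> real"
  assumes pl: "piecewise_linear_halfline \<psi>" and "\<psi> 0 = 0"
    and d0: "(\<psi> has_real_derivative 0) (at 0 within {0..})"
    and no_kink: "\<And>s. 0 < s \<Longrightarrow> s < \<tau> \<Longrightarrow> \<exists>D. (\<psi> has_real_derivative D) (at s within {..s})
                                          \<and> (\<psi> has_real_derivative D) (at s within {s..})"
    and "0 \<le> \<tau>"
  shows "\<psi> \<tau> = 0"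
proof -
  define A where "A = {s \<in> {0..\<tau>}. \<forall>u\<in>{0..s}. \<psi> u = 0}"
  define \<sigma> where "\<sigma> = Sup A"
  have "0 \<in> A" and bdd: "bdd_above A"
    using assms(2,5) by (auto simp: A_def intro: bdd_aboveI[of _ \<tau>])
  have "0 \<le> \<sigma>"
    unfolding \<sigma>_def using \<open>0 \<in> A\<close> bdd by (rule cSup_upper)
  have "\<sigma> \<le> \<tau>"
    unfolding \<sigma>_def using \<open>0 \<in> A\<close> by (intro cSup_least) (auto simp: A_def)
  have below: "\<psi> u = 0" if u: "0 \<le> u" "u < \<sigma>" for u
  proof -
    obtain s where "s \<in> A" "u < s"
      using less_cSupD[of A u] \<open>0 \<in> A\<close> u(2) unfolding \<sigma>_def by blast
    then show ?thesis
      using u(1) by (auto simp: A_def)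
  qed
  have zero: "\<psi> u = 0" if "0 \<le> u" "u \<le> \<sigma>" for u
  proof (cases "u < \<sigma>")
    case False
    with that have "u = \<sigma>"
      by simp
    then show ?thesis
      using continuous_vanishes_at_right_end[OF piecewise_linear_halfline_continuous[OF pl]] below
        \<open>\<psi> 0 = 0\<close> \<open>0 \<le> \<sigma>\<close>
      by (cases "\<sigma> = 0") auto
  qed (use below that in auto)
  have "\<not> \<sigma> < \<tau>"
  proof
    assume "\<sigma> < \<tau>"
    obtain b where "\<sigma> < b" and flat: "\<forall>u\<in>{\<sigma>..b}. \<psi> u = 0"
      by (rule piecewise_linear_halfline_zero_extends[OF pl d0 no_kink \<open>0 \<le> \<sigma>\<close> \<open>\<sigma> < \<tau>\<close> zero]) blast
    have "\<psi> u = 0" if "0 \<le> u" "u \<le> min b \<tau>" for u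
      using zero[of u] flat that by (cases "u \<le> \<sigma>") auto
    then have "min b \<tau> \<in> A"
      using \<open>0 \<le> \<sigma>\<close> \<open>\<sigma> < b\<close> \<open>\<sigma> < \<tau>\<close> by (auto simp: A_def)
    then have "min b \<tau> \<le> \<sigma>"
      unfolding \<sigma>_def using bdd by (rule cSup_upper)
    with \<open>\<sigma> < b\<close> \<open>\<sigma> < \<tau>\<close> show False
      by simp
  qed
  then show ?thesis
    using zero \<open>\<sigma> \<le> \<tau>\<close> \<open>0 \<le> \<tau>\<close> by simp
qed

lemma continuous_first_zero:
  fixes h :: "real \<Rightarrow> real"
  assumes "continuous_on {0..t} h" "h 0 \<noteq> 0" "h t = 0" "0 \<le> t"
  obtains \<tau> where "0 < \<tau>" "\<tau> \<le> t" "h \<tau> = 0" "\<And>s. 0 \<le> s \<Longrightarrow> s < \<tau> \<Longrightarrow> h s \<noteq> 0"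
proof -
  define Z where "Z = {s \<in> {0..t}. h s = 0}"
  have "closed Z"
    unfolding Z_def using assms(1) by (rule continuous_closed_preimage_constant) simp
  moreover have "t \<in> Z" and bdd: "bdd_below Z"
    using assms(3,4) by (auto simp: Z_def intro: bdd_belowI[of _ 0])
  ultimately have "Inf Z \<in> Z"
    using closed_contains_Inf by blast
  then have "0 \<le> Inf Z" "Inf Z \<le> t" "h (Inf Z) = 0"
    by (auto simp: Z_def)
  moreover from this have "0 < Inf Z"
    using assms(2) by (cases "Inf Z = 0") auto
  moreover have "h s \<noteq> 0" if "0 \<le> s" "s < Inf Z" for s
  proof
    assume "h s = 0"
    then have "s \<in> Z"
      using that \<open>Inf Z \<le> t\<close> by (simp add: Z_def)
    then show False
      using cInf_lower[OF _ bdd, of s] that(2) by simp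
  qed
  ultimately show ?thesis
    using that by blast
qed

lemma sticky_order_preserved:
  fixes f g :: "real \<Rightarrow> real"
  assumes "continuous_on {0..} f" "continuous_on {0..} g" "f 0 < g 0"
    and stick: "\<And>s. 0 \<le> s \<Longrightarrow> s \<le> t \<Longrightarrow> f s = g s \<Longrightarrow> f t = g t" and "0 \<le> t"
  shows "f t \<le> g t"
proof (rule ccontr)
  assume "\<not> f t \<le> g t"
  have "{0..t} \<subseteq> {0..}"
    by auto
  then have "continuous_on {0..t} (\<lambda>s. g s - f s)"
    using continuous_on_subset assms(1,2) by (intro continuous_intros) blast+
  then obtain u where "0 \<le> u" "u \<le> t" "g u - f u = 0"
    using IVT2'[of "\<lambda>s. g s - f s" t 0 0] \<open>\<not> f t \<le> g t\<close> assms(3,5) by force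
  then have "f t = g t"
    using stick by simp
  with \<open>\<not> f t \<le> g t\<close> show False
    by simp
qed

section \<open>The polygon of cumulative masses and momenta\<close>

lemma cmass_diff:
  "j \<le> l \<Longrightarrow> cmass m l - cmass m j = (\<Sum>i=Suc j..l. m i)"
  by (simp add: cmass_def sum_Suc_atLeastAtMost_eq_diff[of j l])

lemma cmom_diff:
  "j \<le> l \<Longrightarrow> cmom m v l - cmom m v j = (\<Sum>i=Suc j..l. m i * v i)"
  by (simp add: cmom_def sum_Suc_atLeastAtMost_eq_diff[of j l])

lemma cmass_strict_mono:
  assumes "\<forall>i\<in>{1..n}. 0 < m i" "j < l" "l \<le> n"
  shows "cmass m j < cmass m l"
proof -
  have "0 < (\<Sum>i=Suc j..l. m i)"
    using assms by (intro sum_pos) auto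
  then show ?thesis
    using cmass_diff[of j l m] assms(2) by simp
qed

lemma cmass_mono:
  assumes "\<forall>i\<in>{1..n}. 0 < m i" "j \<le> l" "l \<le> n"
  shows "cmass m j \<le> cmass m l"
proof (cases "j = l")
  case False
  then show ?thesis
    using cmass_strict_mono[OF assms(1), of j l] assms(2,3) by simp
qed simp

lemma cmass_mem_range:
  assumes "\<forall>i\<in>{1..n}. 0 < m i" "l \<le> n"
  shows "cmass m l \<in> {0..cmass m n}"
  using cmass_mono[OF assms(1), of 0 l] cmass_mono[OF assms(1), of l n] assms(2)
  by (simp add: cmass_def)

lemma polygon_fn_cmass:
  assumes pos: "\<forall>i\<in>{1..n}. 0 < m i" and "k \<le> n"
  shows "polygon_fn n m v (cmass m k) = cmom m v k"
proof -
  define c where "c i = v i * max 0 (min (m i) (cmass m k - cmass m (i - 1)))" for i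
  have full: "c i = m i * v i" if "i \<in> {1..k}" for i
  proof -
    have "cmass m (i - 1) + m i = cmass m i"
      using that by (cases i) (simp_all add: cmass_def)
    moreover have "cmass m i \<le> cmass m k" "0 < m i"
      using cmass_mono[OF pos, of i k] pos that \<open>k \<le> n\<close> by auto
    ultimately show ?thesis
      by (simp add: c_def)
  qed
  have empty: "c i = 0" if "i \<in> {Suc k..n}" for i
  proof -
    have "cmass m k \<le> cmass m (i - 1)"
      using that by (intro cmass_mono[OF pos]) auto
    then show ?thesis
      by (simp add: c_def)
  qed
  have "polygon_fn n m v (cmass m k) = (\<Sum>i=1..k. c i) + (\<Sum>i=Suc k..n. c i)"
    using sum_Suc_atLeastAtMost_eq_diff[of k n c] \<open>k \<le> n\<close> by (simp add: polygon_fn_def c_def)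
  also have "\<dots> = cmom m v k"
    using full empty by (simp add: cmom_def)
  finally show ?thesis .
qed

lemma polygon_fn_lower_bound:
  assumes "\<forall>i\<in>{1..n}. 0 < m i"
  shows "- (\<Sum>i=1..n. \<bar>v i\<bar> * m i) \<le> polygon_fn n m v s"
proof -
  have "- (\<bar>v i\<bar> * m i) \<le> v i * max 0 (min (m i) (s - cmass m (i - 1)))" if "i \<in> {1..n}" for i
  proof -
    have "0 < m i"
      using assms that by blast
    then have "\<bar>max 0 (min (m i) (s - cmass m (i - 1)))\<bar> \<le> m i"
      by simp
    then have "\<bar>v i * max 0 (min (m i) (s - cmass m (i - 1)))\<bar> \<le> \<bar>v i\<bar> * m i"
      unfolding abs_mult by (rule mult_left_mono) simp
    then show ?thesis
      by linarith
  qed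
  then show ?thesis
    unfolding polygon_fn_def sum_negf[symmetric] by (rule sum_mono)
qed

lemma contact_index_slope_le:
  assumes pos: "\<forall>i\<in>{1..n}. 0 < m i" and k: "k \<in> contact_indices n m v"
    and "j < k" "k < l" "l \<le> n"
  shows "(cmom m v k - cmom m v j) / (cmass m k - cmass m j)
           \<le> (cmom m v l - cmom m v k) / (cmass m l - cmass m k)"
proof -
  define t where "t = (cmass m k - cmass m j) / (cmass m l - cmass m j)"
  have jk: "cmass m j < cmass m k" and kl: "cmass m k < cmass m l"
    using cmass_strict_mono[OF pos] assms(3-5) by auto
  have t: "0 \<le> t" "t \<le> 1"
    using jk kl by (auto simp: t_def field_simps)
  have "(1 - t) * cmass m j + t * cmass m l = cmass m j + t * (cmass m l - cmass m j)"
    by (simp add: algebra_simps)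
  also have "\<dots> = cmass m k"
    using jk kl by (simp add: t_def)
  finally have comb: "(1 - t) * cmass m j + t * cmass m l = cmass m k" .
  have "cmom m v k = convex_envelope {0..cmass m n} (polygon_fn n m v) (cmass m k)"
    using k by (simp add: contact_indices_def)
  also have "\<dots> \<le> (1 - t) * polygon_fn n m v (cmass m j) + t * polygon_fn n m v (cmass m l)"
    unfolding comb[symmetric]
    using cmass_mem_range[OF pos, of j] cmass_mem_range[OF pos, of l] assms(3-5) t
    by (intro convex_envelope_le_chord[where B = "- (\<Sum>i=1..n. \<bar>v i\<bar> * m i)"]
        polygon_fn_lower_bound pos) auto
  also have "\<dots> = (1 - t) * cmom m v j + t * cmom m v l"
    using assms(3-5) by (simp add: polygon_fn_cmass pos)
  finally have "cmom m v k \<le> (1 - t) * cmom m v j + t * cmom m v l" .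
  then show ?thesis
    by (rule slope_le_of_le_chord[OF jk kl t_def])
qed

section \<open>Sticky particle systems\<close>

lemma particle_system_mass_pos: "particle_system n m x \<Longrightarrow> \<forall>i\<in>{1..n}. 0 < m i"
  by (simp add: particle_system_def)

lemma particle_system_position_less:
  "particle_system n m x \<Longrightarrow> i \<in> {1..n} \<Longrightarrow> j \<in> {1..n} \<Longrightarrow> i < j \<Longrightarrow> x i < x j"
  by (simp add: particle_system_def)

lemma sticky_trajectories_piecewise_linear:
  "sticky_trajectories n m x v \<gamma> \<Longrightarrow> i \<in> {1..n} \<Longrightarrow> piecewise_linear_halfline (\<gamma> i)"
  by (simp add: sticky_trajectories_def)

lemma sticky_trajectories_continuous:
  "sticky_trajectories n m x v \<gamma> \<Longrightarrow> i \<in> {1..n} \<Longrightarrow> continuous_on {0..} (\<gamma> i)"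
  by (simp add: sticky_trajectories_piecewise_linear piecewise_linear_halfline_continuous)

lemma sticky_trajectories_initial:
  assumes "sticky_trajectories n m x v \<gamma>" "i \<in> {1..n}"
  shows "\<gamma> i 0 = x i" "(\<gamma> i has_real_derivative v i) (at 0 within {0..})"
  using assms by (simp_all add: sticky_trajectories_def)

lemma sticky_trajectories_stick:
  assumes "sticky_trajectories n m x v \<gamma>" "i \<in> {1..n}" "j \<in> {1..n}"
    and "0 \<le> s" "s \<le> t" "\<gamma> i s = \<gamma> j s"
  shows "\<gamma> i t = \<gamma> j t"
proof -
  have "\<forall>i\<in>{1..n}. \<forall>j\<in>{1..n}. \<forall>s\<ge>0. \<gamma> i s = \<gamma> j s \<longrightarrow> (\<forall>t\<ge>s. \<gamma> i t = \<gamma> j t)"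
    using assms(1) unfolding sticky_trajectories_def by (elim conjE) assumption
  then show ?thesis
    using assms(2-6) by (meson order.trans)
qed

lemma sticky_trajectories_collision:
  assumes "sticky_trajectories n m x v \<gamma>" "0 < t" "q \<in> {1..n}"
  shows "\<exists>w. (\<forall>k\<in>{k\<in>{1..n}. \<gamma> k t = \<gamma> q t}. (\<gamma> k has_real_derivative w k) (at t within {..t}))
      \<and> (\<gamma> q has_real_derivative
          (\<Sum>k\<in>{k\<in>{1..n}. \<gamma> k t = \<gamma> q t}. m k * w k) / (\<Sum>k\<in>{k\<in>{1..n}. \<gamma> k t = \<gamma> q t}. m k))
         (at t within {t..})"
proof -
  have "\<forall>t>0. \<forall>q\<in>{1..n}. let C = {k\<in>{1..n}. \<gamma> k t = \<gamma> q t} in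
          \<exists>w. (\<forall>k\<in>C. (\<gamma> k has_real_derivative w k) (at t within {..t})) \<and>
            (\<gamma> q has_real_derivative ((\<Sum>k\<in>C. m k * w k) / (\<Sum>k\<in>C. m k))) (at t within {t..})"
    using assms(1) unfolding sticky_trajectories_def by (elim conjE) assumption
  from this[rule_format, OF assms(2,3)] show ?thesis
    unfolding Let_def .
qed

lemma sticky_trajectories_left_derivative:
  assumes "sticky_trajectories n m x v \<gamma>" "0 < t" "q \<in> {1..n}"
  shows "\<exists>D. (\<gamma> q has_real_derivative D) (at t within {..t})"
  using sticky_trajectories_collision[OF assms] assms(3) by blast

lemma sticky_trajectories_right_derivative:
  assumes st: "sticky_trajectories n m x v \<gamma>" and "0 < t" "q \<in> {1..n}"
    and L: "\<And>k. k \<in> {1..n} \<Longrightarrow> \<gamma> k t = \<gamma> q t \<Longrightarrow> (\<gamma> k has_real_derivative L k) (at t within {..t})"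
  shows "(\<gamma> q has_real_derivative
           (\<Sum>k\<in>{k\<in>{1..n}. \<gamma> k t = \<gamma> q t}. m k * L k) / (\<Sum>k\<in>{k\<in>{1..n}. \<gamma> k t = \<gamma> q t}. m k))
         (at t within {t..})"
proof -
  obtain w where w_left: "\<forall>k\<in>{k\<in>{1..n}. \<gamma> k t = \<gamma> q t}. (\<gamma> k has_real_derivative w k) (at t within {..t})"
    and w_right: "(\<gamma> q has_real_derivative
        (\<Sum>k\<in>{k\<in>{1..n}. \<gamma> k t = \<gamma> q t}. m k * w k) / (\<Sum>k\<in>{k\<in>{1..n}. \<gamma> k t = \<gamma> q t}. m k))
       (at t within {t..})"
    using sticky_trajectories_collision[OF assms(1-3)] by blast
  have "w k = L k" if "k \<in> {k\<in>{1..n}. \<gamma> k t = \<gamma> q t}" for k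
    using has_field_derivative_unique[OF bspec[OF w_left that] L] that
    by (simp add: at_within_Iic_at_left)
  then have "(\<Sum>k\<in>{k\<in>{1..n}. \<gamma> k t = \<gamma> q t}. m k * w k) = (\<Sum>k\<in>{k\<in>{1..n}. \<gamma> k t = \<gamma> q t}. m k * L k)"
    by (intro sum.cong) simp_all
  then show ?thesis
    using w_right by simp
qed

text \<open>Clusters at time \<open>s\<close> lie inside \<open>G\<close>, and the collision rule gives every member of a
  cluster the mass-weighted mean of the cluster's left velocities.\<close>

lemma momentum_one_sided_derivatives_agree:
  assumes ps: "particle_system n m x" and st: "sticky_trajectories n m x v \<gamma>"
    and G: "G \<subseteq> {1..n}" and "0 < s"
    and closed: "\<And>i k. i \<in> G \<Longrightarrow> k \<in> {1..n} \<Longrightarrow> \<gamma> k s = \<gamma> i s \<Longrightarrow> k \<in> G"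
  shows "\<exists>D. ((\<lambda>u. \<Sum>i\<in>G. m i * \<gamma> i u) has_real_derivative D) (at s within {..s})
           \<and> ((\<lambda>u. \<Sum>i\<in>G. m i * \<gamma> i u) has_real_derivative D) (at s within {s..})"
proof -
  define C where "C q = {k\<in>G. \<gamma> k s = \<gamma> q s}" for q
  have cluster: "{k\<in>{1..n}. \<gamma> k s = \<gamma> q s} = C q" if "q \<in> G" for q
    using closed that G by (auto simp: C_def)
  have in_range: "q \<in> {1..n}" if "q \<in> G" for q
    using G that by blast
  have "\<forall>k\<in>G. \<exists>L. (\<gamma> k has_real_derivative L) (at s within {..s})"
    using sticky_trajectories_left_derivative[OF st \<open>0 < s\<close>] in_range by blast
  then obtain L where L: "\<And>k. k \<in> G \<Longrightarrow> (\<gamma> k has_real_derivative L k) (at s within {..s})"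
    using bchoice by metis
  have right: "(\<gamma> q has_real_derivative (\<Sum>k\<in>C q. m k * L k) / (\<Sum>k\<in>C q. m k)) (at s within {s..})"
    if q: "q \<in> G" for q
  proof -
    have "(\<gamma> k has_real_derivative L k) (at s within {..s})" if "k \<in> {1..n}" "\<gamma> k s = \<gamma> q s" for k
      using L closed[OF q that] .
    from sticky_trajectories_right_derivative[OF st \<open>0 < s\<close> in_range[OF q] this] show ?thesis
      unfolding cluster[OF q] .
  qed
  have "finite G"
    using G finite_subset by blast
  have "((\<lambda>u. \<Sum>i\<in>G. m i * \<gamma> i u) has_real_derivative (\<Sum>i\<in>G. m i * L i)) (at s within {..s})"
    by (auto intro!: derivative_eq_intros L simp: mult.commute)
  moreover have "((\<lambda>u. \<Sum>i\<in>G. m i * \<gamma> i u) has_real_derivative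
      (\<Sum>q\<in>G. m q * ((\<Sum>k\<in>C q. m k * L k) / (\<Sum>k\<in>C q. m k)))) (at s within {s..})"
    by (auto intro!: derivative_eq_intros right simp: mult.commute)
  moreover have "(\<Sum>q\<in>G. m q * ((\<Sum>k\<in>C q. m k * L k) / (\<Sum>k\<in>C q. m k))) = (\<Sum>i\<in>G. m i * L i)"
    unfolding C_def using \<open>finite G\<close> particle_system_mass_pos[OF ps] G
    by (intro sum_weighted_fibre_averages) auto
  ultimately show ?thesis
    by auto
qed

lemma isolated_group_momentum:
  assumes ps: "particle_system n m x" and st: "sticky_trajectories n m x v \<gamma>"
    and G: "G \<subseteq> {1..n}" and "0 \<le> \<tau>"
    and isolated: "\<And>s i k. 0 < s \<Longrightarrow> s < \<tau> \<Longrightarrow> i \<in> G \<Longrightarrow> k \<in> {1..n} \<Longrightarrow> \<gamma> k s = \<gamma> i s \<Longrightarrow> k \<in> G"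
  shows "(\<Sum>i\<in>G. m i * \<gamma> i \<tau>) = (\<Sum>i\<in>G. m i * x i) + \<tau> * (\<Sum>i\<in>G. m i * v i)"
proof -
  define X where "X = (\<Sum>i\<in>G. m i * x i)"
  define V where "V = (\<Sum>i\<in>G. m i * v i)"
  define M where "M u = (\<Sum>i\<in>G. m i * \<gamma> i u)" for u
  define \<psi> where "\<psi> u = M u + (- X + - V * u)" for u
  have "finite G"
    using G finite_subset by blast
  have "piecewise_linear_halfline \<psi>"
    unfolding \<psi>_def[abs_def] M_def using \<open>finite G\<close> G
    by (intro piecewise_linear_halfline_add piecewise_linear_halfline_sum piecewise_linear_halfline_cmult
        piecewise_linear_halfline_affine sticky_trajectories_piecewise_linear[OF st]) auto
  moreover have "\<psi> 0 = 0"
    using G sticky_trajectories_initial(1)[OF st] by (simp add: \<psi>_def M_def X_def subset_iff)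
  moreover have "(\<psi> has_real_derivative 0) (at 0 within {0..})"
  proof -
    have "(\<psi> has_real_derivative V + - V) (at 0 within {0..})"
      unfolding \<psi>_def[abs_def] M_def V_def using G
      by (auto intro!: derivative_eq_intros sticky_trajectories_initial(2)[OF st] simp: mult.commute)
    then show ?thesis
      by simp
  qed
  moreover have "\<exists>D. (\<psi> has_real_derivative D) (at s within {..s}) \<and> (\<psi> has_real_derivative D) (at s within {s..})"
    if s: "0 < s" "s < \<tau>" for s
  proof -
    obtain D where "(M has_real_derivative D) (at s within {..s})"
      "(M has_real_derivative D) (at s within {s..})"
      using momentum_one_sided_derivatives_agree[OF ps st G s(1)] isolated[OF s]
      unfolding M_def[abs_def] by blast
    then show ?thesis
      unfolding \<psi>_def[abs_def] by (intro exI[of _ "D + - V"] conjI) (auto intro!: derivative_eq_intros)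
  qed
  ultimately have "\<psi> \<tau> = 0"
    using piecewise_linear_halfline_eq_0 \<open>0 \<le> \<tau>\<close> by blast
  then show ?thesis
    by (simp add: \<psi>_def M_def X_def V_def algebra_simps)
qed

lemma trajectories_ordered:
  assumes ps: "particle_system n m x" and st: "sticky_trajectories n m x v \<gamma>"
    and "i \<le> j" "i \<in> {1..n}" "j \<in> {1..n}" "0 \<le> t"
  shows "\<gamma> i t \<le> \<gamma> j t"
proof (cases "i = j")
  case False
  with assms(3) have "\<gamma> i 0 < \<gamma> j 0"
    using particle_system_position_less[OF ps] sticky_trajectories_initial(1)[OF st] assms(4,5) by simp
  show ?thesis
  proof (rule sticky_order_preserved[of "\<gamma> i" "\<gamma> j" t])
    show "continuous_on {0..} (\<gamma> i)" "continuous_on {0..} (\<gamma> j)"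
      using sticky_trajectories_continuous[OF st] assms(4,5) by blast+
    show "\<gamma> i t = \<gamma> j t" if "0 \<le> s" "s \<le> t" "\<gamma> i s = \<gamma> j s" for s
      by (rule sticky_trajectories_stick[OF st assms(4,5) that])
  qed fact+
qed simp

lemma trajectories_apart_before:
  assumes ps: "particle_system n m x" and st: "sticky_trajectories n m x v \<gamma>"
    and "i < j" "i \<in> {1..n}" "j \<in> {1..n}" "\<gamma> i \<tau> \<noteq> \<gamma> j \<tau>" "0 \<le> s" "s \<le> \<tau>"
  shows "\<gamma> i s < \<gamma> j s"
proof -
  have "\<gamma> i s \<le> \<gamma> j s"
    using assms(3-5,7) by (intro trajectories_ordered[OF ps st]) auto
  moreover have "\<gamma> i s \<noteq> \<gamma> j s"
    using sticky_trajectories_stick[OF st, of i j s \<tau>] assms(4-8) by blast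
  ultimately show ?thesis
    by simp
qed

section \<open>No collisions across a contact index\<close>

lemma first_meeting_of_neighbours:
  assumes ps: "particle_system n m x" and st: "sticky_trajectories n m x v \<gamma>"
    and k: "k \<in> {1..n}" "Suc k \<le> n" and "0 \<le> t" "\<gamma> k t = \<gamma> (Suc k) t"
  obtains \<tau> where "0 < \<tau>" "\<gamma> k \<tau> = \<gamma> (Suc k) \<tau>"
    "\<And>s. 0 \<le> s \<Longrightarrow> s < \<tau> \<Longrightarrow> \<gamma> k s < \<gamma> (Suc k) s"
proof -
  have k': "Suc k \<in> {1..n}"
    using k by simp
  have "{0..t} \<subseteq> {0..}"
    by auto
  then have "continuous_on {0..t} (\<lambda>s. \<gamma> (Suc k) s - \<gamma> k s)"
    using continuous_on_subset sticky_trajectories_continuous[OF st] k k'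
    by (intro continuous_intros) blast+
  moreover have "\<gamma> (Suc k) 0 - \<gamma> k 0 \<noteq> 0"
    using particle_system_position_less[OF ps k(1) k'] sticky_trajectories_initial(1)[OF st] k k'
    by simp
  ultimately obtain \<tau> where "0 < \<tau>" "\<tau> \<le> t" "\<gamma> (Suc k) \<tau> - \<gamma> k \<tau> = 0"
    and apart: "\<And>s. 0 \<le> s \<Longrightarrow> s < \<tau> \<Longrightarrow> \<gamma> (Suc k) s - \<gamma> k s \<noteq> 0"
    using continuous_first_zero[of t "\<lambda>s. \<gamma> (Suc k) s - \<gamma> k s"] assms(5,6) by auto
  moreover have "\<gamma> k s < \<gamma> (Suc k) s" if "0 \<le> s" "s < \<tau>" for s
    using apart[OF that] trajectories_ordered[OF ps st, of k "Suc k" s] k k' that(1) by simp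
  ultimately show ?thesis
    using that by simp
qed

lemma maximal_cluster_at_meeting:
  assumes ps: "particle_system n m x" and st: "sticky_trajectories n m x v \<gamma>"
    and "k \<in> {1..n}" "Suc k \<le> n" "0 \<le> \<tau>" "\<gamma> k \<tau> = \<gamma> (Suc k) \<tau>"
  obtains j l where "j < k" "k < l" "l \<le> n" "\<And>i. i \<in> {Suc j..l} \<Longrightarrow> \<gamma> i \<tau> = \<gamma> k \<tau>"
    "0 < j \<Longrightarrow> \<gamma> j \<tau> \<noteq> \<gamma> (Suc j) \<tau>" "l < n \<Longrightarrow> \<gamma> l \<tau> \<noteq> \<gamma> (Suc l) \<tau>"
proof -
  obtain j l where run: "j < k" "k < l" "l \<le> n" "\<gamma> (Suc j) \<tau> = \<gamma> k \<tau>" "\<gamma> l \<tau> = \<gamma> k \<tau>"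
    "0 < j \<Longrightarrow> \<gamma> j \<tau> \<noteq> \<gamma> k \<tau>" "l < n \<Longrightarrow> \<gamma> (Suc l) \<tau> \<noteq> \<gamma> k \<tau>"
    by (rule maximal_run_around[of "\<lambda>i. \<gamma> i \<tau> = \<gamma> k \<tau>" k n]) (use assms(3,4,6) in auto)
  have at_meeting_point: "\<gamma> i \<tau> = \<gamma> k \<tau>" if "i \<in> {Suc j..l}" for i
  proof -
    have "\<gamma> (Suc j) \<tau> \<le> \<gamma> i \<tau>" "\<gamma> i \<tau> \<le> \<gamma> l \<tau>"
      using that run(3) assms(5) by (simp_all add: trajectories_ordered[OF ps st])
    then show ?thesis
      using run(4,5) by simp
  qed
  have left_end: "\<gamma> j \<tau> \<noteq> \<gamma> (Suc j) \<tau>" if "0 < j"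
    using run(4,6) that by simp
  have right_end: "\<gamma> l \<tau> \<noteq> \<gamma> (Suc l) \<tau>" if "l < n"
    using run(5,7) that by simp
  show ?thesis
    by (rule that[OF run(1-3) at_meeting_point left_end right_end])
qed

lemma block_isolated:
  assumes ps: "particle_system n m x" and st: "sticky_trajectories n m x v \<gamma>"
    and "l \<le> n" "0 \<le> s"
    and left: "0 < j \<Longrightarrow> \<gamma> j s < \<gamma> (Suc j) s"
    and right: "l < n \<Longrightarrow> \<gamma> l s < \<gamma> (Suc l) s"
    and i: "i \<in> {Suc j..l}" and k: "k \<in> {1..n}" and meet: "\<gamma> k s = \<gamma> i s"
  shows "k \<in> {Suc j..l}"
proof (rule ccontr)
  assume "k \<notin> {Suc j..l}"
  then consider "k \<le> j" | "l < k"
    by (meson atLeastAtMost_iff not_less_eq_eq not_le)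
  then show False
  proof cases
    case 1
    then have "\<gamma> k s \<le> \<gamma> j s" "\<gamma> (Suc j) s \<le> \<gamma> i s"
      using i k \<open>l \<le> n\<close> \<open>0 \<le> s\<close> trajectories_ordered[OF ps st] by simp_all
    with left show False
      using 1 k meet by simp
  next
    case 2
    then have "\<gamma> i s \<le> \<gamma> l s" "\<gamma> (Suc l) s \<le> \<gamma> k s"
      using i k \<open>0 \<le> s\<close> trajectories_ordered[OF ps st] by simp_all
    with right show False
      using 2 k meet by simp
  qed
qed

lemma isolated_block_meeting_point:
  assumes ps: "particle_system n m x" and st: "sticky_trajectories n m x v \<gamma>"
    and "j < l" "l \<le> n" "0 \<le> \<tau>"
    and left: "\<And>s. 0 \<le> s \<Longrightarrow> s < \<tau> \<Longrightarrow> 0 < j \<Longrightarrow> \<gamma> j s < \<gamma> (Suc j) s"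
    and right: "\<And>s. 0 \<le> s \<Longrightarrow> s < \<tau> \<Longrightarrow> l < n \<Longrightarrow> \<gamma> l s < \<gamma> (Suc l) s"
    and at_y: "\<And>i. i \<in> {Suc j..l} \<Longrightarrow> \<gamma> i \<tau> = y"
  shows "y * (cmass m l - cmass m j) = (\<Sum>i=Suc j..l. m i * x i) + \<tau> * (cmom m v l - cmom m v j)"
proof -
  have "(\<Sum>i=Suc j..l. m i * \<gamma> i \<tau>) = (\<Sum>i=Suc j..l. m i * x i) + \<tau> * (\<Sum>i=Suc j..l. m i * v i)"
  proof (rule isolated_group_momentum[OF ps st _ \<open>0 \<le> \<tau>\<close>])
    show "{Suc j..l} \<subseteq> {1..n}"
      using \<open>l \<le> n\<close> by auto
    show "k \<in> {Suc j..l}"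
      if s: "0 < s" "s < \<tau>" and "i \<in> {Suc j..l}" "k \<in> {1..n}" "\<gamma> k s = \<gamma> i s" for s i k
    proof -
      have "0 \<le> s"
        using s(1) by simp
      then show ?thesis
        using block_isolated[OF ps st \<open>l \<le> n\<close> \<open>0 \<le> s\<close> left right] s(2) that(3-5) by blast
    qed
  qed
  moreover have "(\<Sum>i=Suc j..l. m i * \<gamma> i \<tau>) = (\<Sum>i=Suc j..l. m i) * y"
    using at_y by (simp add: sum_distrib_right)
  moreover have "(\<Sum>i=Suc j..l. m i) = cmass m l - cmass m j"
    using cmass_diff[of j l m] \<open>j < l\<close> by simp
  moreover have "(\<Sum>i=Suc j..l. m i * v i) = cmom m v l - cmom m v j"
    using cmom_diff[of j l m v] \<open>j < l\<close> by simp
  ultimately show ?thesis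
    by (simp add: mult.commute)
qed

lemma block_initial_moment_le:
  assumes ps: "particle_system n m x" and "j < k" "k \<le> n"
  shows "(\<Sum>i=Suc j..k. m i * x i) \<le> (cmass m k - cmass m j) * x k"
proof -
  have "(\<Sum>i=Suc j..k. m i * x i) \<le> (\<Sum>i=Suc j..k. m i * x k)"
  proof (rule sum_mono)
    fix i assume i: "i \<in> {Suc j..k}"
    then have "i \<in> {1..n}" "i \<le> k"
      using assms(3) by auto
    then have "x i \<le> x k"
      using particle_system_position_less[OF ps, of i k] assms(3) by (cases "i = k") simp_all
    moreover have "0 < m i"
      using particle_system_mass_pos[OF ps] \<open>i \<in> {1..n}\<close> by blast
    ultimately show "m i * x i \<le> m i * x k"
      by (simp add: mult_left_mono)
  qed
  then show ?thesis
    using \<open>j < k\<close> by (simp add: cmass_diff sum_distrib_right)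
qed

lemma block_initial_moment_ge:
  assumes ps: "particle_system n m x" and "k < l" "l \<le> n"
  shows "(cmass m l - cmass m k) * x (Suc k) \<le> (\<Sum>i=Suc k..l. m i * x i)"
proof -
  have "(\<Sum>i=Suc k..l. m i * x (Suc k)) \<le> (\<Sum>i=Suc k..l. m i * x i)"
  proof (rule sum_mono)
    fix i assume i: "i \<in> {Suc k..l}"
    then have "i \<in> {1..n}" "Suc k \<le> i"
      using assms(3) by auto
    then have "x (Suc k) \<le> x i"
      using particle_system_position_less[OF ps, of "Suc k" i] assms(3) by (cases "i = Suc k") simp_all
    moreover have "0 < m i"
      using particle_system_mass_pos[OF ps] \<open>i \<in> {1..n}\<close> by blast
    ultimately show "m i * x (Suc k) \<le> m i * x i"
      by (simp add: mult_left_mono)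
  qed
  then show ?thesis
    using \<open>k < l\<close> by (simp add: cmass_diff sum_distrib_right)
qed

lemma neighbours_meet_at_common_centre_of_mass:
  assumes ps: "particle_system n m x" and st: "sticky_trajectories n m x v \<gamma>"
    and kn: "k \<in> {1..n}" "Suc k \<le> n" and "0 \<le> t" "\<gamma> k t = \<gamma> (Suc k) t"
  obtains \<tau> y j l where "0 < \<tau>" "j < k" "k < l" "l \<le> n"
    "y * (cmass m k - cmass m j) = (\<Sum>i=Suc j..k. m i * x i) + \<tau> * (cmom m v k - cmom m v j)"
    "y * (cmass m l - cmass m k) = (\<Sum>i=Suc k..l. m i * x i) + \<tau> * (cmom m v l - cmom m v k)"
proof -
  obtain \<tau> where "0 < \<tau>" and meet: "\<gamma> k \<tau> = \<gamma> (Suc k) \<tau>"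
    and before: "\<And>s. 0 \<le> s \<Longrightarrow> s < \<tau> \<Longrightarrow> \<gamma> k s < \<gamma> (Suc k) s"
    by (rule first_meeting_of_neighbours[OF ps st kn assms(5,6)]) blast
  obtain j l where "j < k" "k < l" "l \<le> n" and at_y: "\<And>i. i \<in> {Suc j..l} \<Longrightarrow> \<gamma> i \<tau> = \<gamma> k \<tau>"
    and left_end: "0 < j \<Longrightarrow> \<gamma> j \<tau> \<noteq> \<gamma> (Suc j) \<tau>"
    and right_end: "l < n \<Longrightarrow> \<gamma> l \<tau> \<noteq> \<gamma> (Suc l) \<tau>"
    by (rule maximal_cluster_at_meeting[OF ps st kn less_imp_le[OF \<open>0 < \<tau>\<close>] meet]) blast
  have left_run: "\<gamma> k \<tau> * (cmass m k - cmass m j)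
      = (\<Sum>i=Suc j..k. m i * x i) + \<tau> * (cmom m v k - cmom m v j)"
  proof (rule isolated_block_meeting_point[OF ps st \<open>j < k\<close> _ _ _ _ at_y])
    show "\<gamma> j s < \<gamma> (Suc j) s" if "0 \<le> s" "s < \<tau>" "0 < j" for s
      using trajectories_apart_before[OF ps st, of j "Suc j" \<tau> s] left_end \<open>j < k\<close> kn that by simp
  qed (use kn \<open>0 < \<tau>\<close> before \<open>k < l\<close> in auto)
  have right_run: "\<gamma> k \<tau> * (cmass m l - cmass m k)
      = (\<Sum>i=Suc k..l. m i * x i) + \<tau> * (cmom m v l - cmom m v k)"
  proof (rule isolated_block_meeting_point[OF ps st \<open>k < l\<close> \<open>l \<le> n\<close> _ before])
    show "\<gamma> l s < \<gamma> (Suc l) s" if "0 \<le> s" "s < \<tau>" "l < n" for s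
      using trajectories_apart_before[OF ps st, of l "Suc l" \<tau> s] right_end \<open>k < l\<close> kn that by simp
    show "\<gamma> i \<tau> = \<gamma> k \<tau>" if "i \<in> {Suc k..l}" for i
      using at_y[of i] that \<open>j < k\<close> by simp
  qed (use \<open>0 < \<tau>\<close> in simp)
  show ?thesis
    by (rule that[OF \<open>0 < \<tau>\<close> \<open>j < k\<close> \<open>k < l\<close> \<open>l \<le> n\<close> left_run right_run])
qed

lemma contact_index_separates:
  assumes ps: "particle_system n m x" and st: "sticky_trajectories n m x v \<gamma>"
    and k: "k \<in> contact_indices n m v"
    and p: "p \<in> {1..n}" and q: "q \<in> {1..n}" and "p \<le> k" "k < q" and "0 \<le> t"
  shows "\<gamma> p t \<noteq> \<gamma> q t"
proof
  assume "\<gamma> p t = \<gamma> q t"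
  have kn: "k \<in> {1..n}" "Suc k \<le> n" and "Suc k \<in> {1..n}"
    using p q \<open>p \<le> k\<close> \<open>k < q\<close> by auto
  have "\<gamma> p t \<le> \<gamma> k t" "\<gamma> k t \<le> \<gamma> (Suc k) t" "\<gamma> (Suc k) t \<le> \<gamma> q t"
    using p q kn \<open>p \<le> k\<close> \<open>k < q\<close> \<open>0 \<le> t\<close> trajectories_ordered[OF ps st] by simp_all
  then have meet: "\<gamma> k t = \<gamma> (Suc k) t"
    using \<open>\<gamma> p t = \<gamma> q t\<close> by simp
  obtain \<tau> y j l where "0 < \<tau>" "j < k" "k < l" "l \<le> n"
    and left: "y * (cmass m k - cmass m j) = (\<Sum>i=Suc j..k. m i * x i) + \<tau> * (cmom m v k - cmom m v j)"
    and right: "y * (cmass m l - cmass m k) = (\<Sum>i=Suc k..l. m i * x i) + \<tau> * (cmom m v l - cmom m v k)"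
    by (rule neighbours_meet_at_common_centre_of_mass[OF ps st kn \<open>0 \<le> t\<close> meet]) blast
  have pos: "\<forall>i\<in>{1..n}. 0 < m i"
    by (rule particle_system_mass_pos[OF ps])
  have "0 < cmass m k - cmass m j" "0 < cmass m l - cmass m k"
    using cmass_strict_mono[OF pos] \<open>j < k\<close> \<open>k < l\<close> \<open>l \<le> n\<close> by auto
  then have "((\<Sum>i=Suc j..k. m i * x i) + \<tau> * (cmom m v k - cmom m v j)) / (cmass m k - cmass m j)
      < ((\<Sum>i=Suc k..l. m i * x i) + \<tau> * (cmom m v l - cmom m v k)) / (cmass m l - cmass m k)"
    using less_imp_le[OF \<open>0 < \<tau>\<close>] block_initial_moment_le[OF ps \<open>j < k\<close> kn(2)[THEN Suc_leD]]
      block_initial_moment_ge[OF ps \<open>k < l\<close> \<open>l \<le> n\<close>]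
      particle_system_position_less[OF ps kn(1) \<open>Suc k \<in> {1..n}\<close> lessI]
      contact_index_slope_le[OF pos k \<open>j < k\<close> \<open>k < l\<close> \<open>l \<le> n\<close>]
    by (rule centre_of_mass_stays_left)
  then show False
    using \<open>0 < cmass m k - cmass m j\<close> \<open>0 < cmass m l - cmass m k\<close>
    unfolding left[symmetric] right[symmetric] by simp
qed

lemma contact_index_between_blocks:
  assumes "i < j" "j \<le> nblocks n m v" "p \<in> block n m v i" "q \<in> block n m v j"
  obtains k where "k \<in> contact_indices n m v" "p \<in> {1..n}" "q \<in> {1..n}" "p \<le> k" "k < q"
proof -
  define ks where "ks = kseq n m v"
  have "finite (contact_indices n m v)"
    by (rule finite_subset[of _ "{0..n}"]) (auto simp: contact_indices_def)
  then have set_ks: "set ks = contact_indices n m v" and "sorted ks"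
    by (simp_all add: ks_def kseq_def)
  have "j < length ks"
    using assms(1,2) by (auto simp: nblocks_def ks_def)
  then have in_ks: "ks ! i \<in> contact_indices n m v" "ks ! j \<in> contact_indices n m v"
    using assms(1) set_ks nth_mem by (metis order.strict_trans)+
  then have "ks ! i \<le> n" "ks ! j \<le> n"
    by (auto simp: contact_indices_def)
  have "ks ! i \<le> ks ! (j - 1)"
    using \<open>sorted ks\<close> \<open>j < length ks\<close> assms(1) by (intro sorted_nth_mono) auto
  moreover have "ks ! (i - 1) < p" "p \<le> ks ! i" "ks ! (j - 1) < q" "q \<le> ks ! j"
    using assms(3,4) by (auto simp: block_def ks_def)
  ultimately show ?thesis
    using that[OF in_ks(1)] \<open>ks ! i \<le> n\<close> \<open>ks ! j \<le> n\<close> by auto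
qed

theorem lemma3p1:
  fixes n :: nat and m x v :: "nat \<Rightarrow> real" and \<gamma> :: "nat \<Rightarrow> real \<Rightarrow> real"
  assumes "particle_system n m x"
    and "sticky_trajectories n m x v \<gamma>"
  shows "\<forall>i\<in>{1..nblocks n m v}. \<forall>j\<in>{1..nblocks n m v}. i \<noteq> j \<longrightarrow>
           (\<forall>p\<in>block n m v i. \<forall>q\<in>block n m v j. \<forall>t\<ge>0. \<gamma> p t \<noteq> \<gamma> q t)"
proof -
  have apart: "\<gamma> p t \<noteq> \<gamma> q t"
    if blocks: "i < j" "j \<le> nblocks n m v" "p \<in> block n m v i" "q \<in> block n m v j"
      and "0 \<le> t" for i j p q t
  proof -
    obtain k where "k \<in> contact_indices n m v" "p \<in> {1..n}" "q \<in> {1..n}" "p \<le> k" "k < q"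
      using contact_index_between_blocks[OF blocks] .
    then show ?thesis
      using contact_index_separates[OF assms] \<open>0 \<le> t\<close> by blast
  qed
  show ?thesis
  proof (intro ballI impI allI)
    fix i j p q and t :: real
    assume "i \<in> {1..nblocks n m v}" "j \<in> {1..nblocks n m v}" "i \<noteq> j"
      and "p \<in> block n m v i" "q \<in> block n m v j" "0 \<le> t"
    then show "\<gamma> p t \<noteq> \<gamma> q t"
      using apart[of i j p q t] apart[of j i q p t] by (cases "i < j") auto
  qed
qed

end
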